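(* Let a WIFS satisfy the $\Phi$-FNC for an iteration rule $\Phi$, and let $\mathcal L$ be a loop class of its transition graph with vertices $v_1,\dots,v_k$. For $1\le i,j\le k$ let $M_{i,j}=\sum_e T(e)$, the sum over all edges $e$ of $\mathcal G$ from $v_i$ to $v_j$ (the zero matrix of the appropriate size if there are none), and let $M=M(\mathcal L)$ be the block matrix $(M_{i,j})_{1\le i,j\le k}$. If the non-negative matrix $M$ is irreducible, then $\mathcal L$ is an irreducible loop class.
   Context: Setting. A weighted iterated function system (WIFS) $(S_i,p_i)_{i\in\mathcal I}$ consists of a finite index set $\mathcal I$, maps $S_i(x)=r_ix+d_i$ on $\mathbb R$ with $0<|r_i|<1$, and probabilities $p_i>0$ with $\sum_i p_i=1$. Its self-similar set $K$ is the unique nonempty compact set with $K=\bigcup_i S_i(K)$ and its self-similar measure $\mu$ is the unique Borel probability measure with $\mu(E)=\sum_i p_i\,\mu(S_i^{-1}(E))$. Standing assumptions: $K$ is not a singleton and its convex hull is $[0,1]$. For a finite word $\sigma=\sigma_1\cdots\sigma_n$ over $\mathcal I$ (the set of all finite words, including the empty word, is $\mathcal I^*$) put $S_\sigma=S_{\sigma_1}\circ\cdots\circ S_{\sigma_n}$, $p_\sigma=p_{\sigma_1}\cdots p_{\sigma_n}$ (identity and $1$ for the empty word). For a map $f$, $f\mu:=\mu\circ f^{-1}$. Iteration rules and net intervals. Fix a total order on the affine bijections $x\mapsto ax+b$ ($a\ne0$) of $\mathbb R$. For a closed interval $J$ let $T_J(x)=rx+c$ ($r>0$) be the map with $T_J([0,1])=J$.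 An iteration rule $\Phi$ assigns to each finite strictly increasing tuple $v=(f_1,\dots,f_m)$ of such maps a tuple $\Phi(v)=(\mathcal C_1,\dots,\mathcal C_m)$ of finite subsets of $\mathcal I^*$ such that for each $i$ and all large $n$ every word of length $n$ has a unique prefix in $\mathcal C_i$. Children of a pair $(\Delta,v)$, $\Delta=[a,b]$: let $\mathcal Y=\{T_\Delta\circ f_i\circ S_\tau:1\le i\le m,\tau\in\mathcal C_i\}$ and list $\{a,b\}\cup\{g(z):g\in\mathcal Y,z\in\{0,1\},g(z)\in\Delta\}$ as $a=y_1<\dots<y_{k+1}=b$; the children are the pairs $(\Delta',v')$ with $\Delta'=[y_j,y_{j+1}]$, $(y_j,y_{j+1})\cap K\ne\emptyset$, and $v'$ the increasing tuple of the distinct maps $T_{\Delta'}^{-1}\circ g$, $g\in\mathcal Y$, $g(K)\cap(y_j,y_{j+1})\ne\emptyset$. Let $\mathcal N_0=\{([0,1],(\mathrm{id}))\}$ and $\mathcal N_{n+1}$ the set of children of members of $\mathcal N_n$; second components are neighbour sets. $\Phi$ must also satisfy: (i) $\max\{r\,\mathrm{diam}\Delta:(\Delta,v)\in\mathcal N_n,(x\mapsto rx+c)\in v\}\to0$; (ii) if $f_1\neq f_2$ lie in a neighbour set then $f_1\circ S_\sigma\ne f_2$ for all $\sigma\in\mathcal I^*$. (Convention: a pair whose only child has the same interval is replaced by that child.) Transition graph. Children and their data depend only on $v$. The transition graph $\mathcal G$ has as vertices the neighbour sets occurring, root $(\mathrm{id})$, and one edge $e$ from $v$ to $v'$ for each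 child $(\Delta',v')$ of a pair $(\Delta,v)$ (distinguished by the relative position of $\Delta'$ in $\Delta$), with transition matrix $T(e)$: for $v=(f_1,\dots,f_m)$, $v'=(g_1,\dots,g_n)$, $\Phi(v)=(\mathcal C_1,\dots,\mathcal C_m)$, $T(e)$ is the $m\times n$ matrix with $T(e)_{i,j}=\frac{f_i\mu((0,1))}{g_j\mu((0,1))}\sum p_\omega$ over $\omega\in\mathcal C_i$ with $T_\Delta\circ f_i\circ S_\omega=T_{\Delta'}\circ g_j$. For a path $\eta=(e_1,\dots,e_n)$, $T(\eta)=T(e_1)\cdots T(e_n)$ and $\|A\|$ = sum of entries. The WIFS satisfies the $\Phi$-FNC if $\mathcal G$ is finite. A loop class is an induced subgraph $\mathcal L$ of $\mathcal G$ that is strongly connected, has at least one edge, and is maximal with these properties. $\mathcal L$ is irreducible if there are a finite set $\mathcal H$ of paths and a constant $C\ge1$ such that for all finite paths $\eta_1,\eta_2$ in $\mathcal L$ there is $\gamma\in\mathcal H$ with $\eta_1\gamma\eta_2$ a path and $C^{-1}\|T(\eta_1)\|\|T(\eta_2)\|\le\|T(\eta_1\gamma\eta_2)\|\le C\|T(\eta_1)\|\|T(\eta_2)\|$. A non-negative square matrix $M$ is irreducible if for all indices $i,j$ there is $n\ge1$ with $(M^n)_{i,j}>0$. *)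

theory Defs
  imports "HOL-Probability.Probability" "Jordan_Normal_Form.Matrix"
begin

section \<open>Affine maps x \<mapsto> a x + b, represented as pairs (a, b)\<close>

type_synonym aff = "real \<times> real"

definition aff_app :: "aff \<Rightarrow> real \<Rightarrow> real" where
  "aff_app f x = fst f * x + snd f"

definition aff_comp :: "aff \<Rightarrow> aff \<Rightarrow> aff" where
  "aff_comp f g = (fst f * fst g, fst f * snd g + snd f)"

definition aff_inv :: "aff \<Rightarrow> aff" where
  "aff_inv f = (1 / fst f, - snd f / fst f)"

definition aff_id :: aff where
  "aff_id = (1, 0)"

text \<open>Closed interval [a,b] represented as the pair (a,b), a < b.
  T_J is the increasing affine map with T_J([0,1]) = J.\<close>
definition Tint :: "real \<times> real \<Rightarrow> aff" where
  "Tint J = (snd J - fst J, fst J)"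

section \<open>The WIFS\<close>

definition wifs :: "('i::finite \<Rightarrow> real) \<Rightarrow> ('i \<Rightarrow> real) \<Rightarrow> ('i \<Rightarrow> real) \<Rightarrow> bool" where
  "wifs r d p \<longleftrightarrow> (\<forall>i. 0 < \<bar>r i\<bar> \<and> \<bar>r i\<bar> < 1) \<and> (\<forall>i. p i > 0) \<and> (\<Sum>i\<in>UNIV. p i) = 1"

definition Smap :: "('i \<Rightarrow> real) \<Rightarrow> ('i \<Rightarrow> real) \<Rightarrow> 'i \<Rightarrow> aff" where
  "Smap r d i = (r i, d i)"

definition Sword :: "('i \<Rightarrow> real) \<Rightarrow> ('i \<Rightarrow> real) \<Rightarrow> 'i list \<Rightarrow> aff" where
  "Sword r d w = foldr (\<lambda>i acc. aff_comp (Smap r d i) acc) w aff_id"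

definition pword :: "('i \<Rightarrow> real) \<Rightarrow> 'i list \<Rightarrow> real" where
  "pword p w = prod_list (map p w)"

definition ssset :: "('i::finite \<Rightarrow> real) \<Rightarrow> ('i \<Rightarrow> real) \<Rightarrow> real set" where
  "ssset r d = (THE K. compact K \<and> K \<noteq> {} \<and> K = (\<Union>i. aff_app (Smap r d i) ` K))"

definition ssmeas :: "('i::finite \<Rightarrow> real) \<Rightarrow> ('i \<Rightarrow> real) \<Rightarrow> ('i \<Rightarrow> real) \<Rightarrow> real measure" where
  "ssmeas r d p = (THE M. prob_space M \<and> sets M = sets borel \<and>
     (\<forall>E\<in>sets borel. measure M E = (\<Sum>i\<in>UNIV. p i * measure M (aff_app (Smap r d i) -` E))))"

definition fmu01 :: "('i::finite \<Rightarrow> real) \<Rightarrow> ('i \<Rightarrow> real) \<Rightarrow> ('i \<Rightarrow> real) \<Rightarrow> aff \<Rightarrow> real" where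
  "fmu01 r d p f = measure (ssmeas r d p) (aff_app f -` {0<..<1})"

section \<open>Iteration rules, children, net intervals\<close>

definition slt :: "aff rel \<Rightarrow> aff \<Rightarrow> aff \<Rightarrow> bool" where
  "slt lo f g \<longleftrightarrow> (f, g) \<in> lo"

definition incr_tuple :: "aff rel \<Rightarrow> aff list \<Rightarrow> bool" where
  "incr_tuple lo v \<longleftrightarrow> sorted_wrt (slt lo) v \<and> (\<forall>f\<in>set v. fst f \<noteq> 0)"

definition sorted_tuple :: "aff rel \<Rightarrow> aff set \<Rightarrow> aff list" where
  "sorted_tuple lo A = (THE xs. sorted_wrt (slt lo) xs \<and> set xs = A)"

definition prefix_code :: "'i list set \<Rightarrow> bool" where
  "prefix_code C \<longleftrightarrow> finite C \<and>
     (\<exists>N. \<forall>n\<ge>N. \<forall>w::'i list. length w = n \<longrightarrow> (\<exists>!\<tau>. \<tau> \<in> C \<and> take (length \<tau>) w = \<tau>))"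

definition Ymaps :: "('i \<Rightarrow> real) \<Rightarrow> ('i \<Rightarrow> real) \<Rightarrow> (aff list \<Rightarrow> 'i list set list)
     \<Rightarrow> real \<times> real \<Rightarrow> aff list \<Rightarrow> aff set" where
  "Ymaps r d Phi \<Delta> v = {aff_comp (Tint \<Delta>) (aff_comp (v ! i) (Sword r d \<tau>)) | i \<tau>.
       i < length v \<and> \<tau> \<in> Phi v ! i}"

definition endpts :: "('i \<Rightarrow> real) \<Rightarrow> ('i \<Rightarrow> real) \<Rightarrow> (aff list \<Rightarrow> 'i list set list)
     \<Rightarrow> real \<times> real \<Rightarrow> aff list \<Rightarrow> real set" where
  "endpts r d Phi \<Delta> v = {fst \<Delta>, snd \<Delta>} \<union>
     {aff_app g z | g z. g \<in> Ymaps r d Phi \<Delta> v \<and> z \<in> {0, 1} \<and> aff_app g z \<in> {fst \<Delta>..snd \<Delta>}}"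

definition is_child :: "('i::finite \<Rightarrow> real) \<Rightarrow> ('i \<Rightarrow> real) \<Rightarrow> aff rel \<Rightarrow> (aff list \<Rightarrow> 'i list set list)
     \<Rightarrow> (real \<times> real) \<times> aff list \<Rightarrow> (real \<times> real) \<times> aff list \<Rightarrow> bool" where
  "is_child r d lo Phi x c \<longleftrightarrow>
     (let \<Delta> = fst x; v = snd x; \<Delta>' = fst c; y = fst \<Delta>'; y' = snd \<Delta>';
          E = endpts r d Phi \<Delta> v; K = ssset r d in
      y \<in> E \<and> y' \<in> E \<and> y < y' \<and> \<not> (\<exists>z\<in>E. y < z \<and> z < y') \<and>
      {y<..<y'} \<inter> K \<noteq> {} \<and>
      snd c = sorted_tuple lo {aff_comp (aff_inv (Tint \<Delta>')) g | g.
                  g \<in> Ymaps r d Phi \<Delta> v \<and> aff_app g ` K \<inter> {y<..<y'} \<noteq> {}})"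

text \<open>The levels N_n of net intervals with neighbour sets.\<close>
primrec netlevel :: "('i::finite \<Rightarrow> real) \<Rightarrow> ('i \<Rightarrow> real) \<Rightarrow> aff rel \<Rightarrow> (aff list \<Rightarrow> 'i list set list)
     \<Rightarrow> nat \<Rightarrow> ((real \<times> real) \<times> aff list) set" where
  "netlevel r d lo Phi 0 = {((0, 1), [aff_id])}"
| "netlevel r d lo Phi (Suc n) = {c. \<exists>x\<in>netlevel r d lo Phi n. is_child r d lo Phi x c}"

definition iteration_rule :: "('i::finite \<Rightarrow> real) \<Rightarrow> ('i \<Rightarrow> real) \<Rightarrow> aff rel
     \<Rightarrow> (aff list \<Rightarrow> 'i list set list) \<Rightarrow> bool" where
  "iteration_rule r d lo Phi \<longleftrightarrow>
     (\<forall>v. incr_tuple lo v \<longrightarrow> length (Phi v) = length v \<and> (\<forall>C\<in>set (Phi v). prefix_code C)) \<and>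
     (\<forall>\<epsilon>>0. \<exists>N. \<forall>n\<ge>N. \<forall>x\<in>netlevel r d lo Phi n. \<forall>f\<in>set (snd x).
         \<bar>fst f\<bar> * (snd (fst x) - fst (fst x)) < \<epsilon>) \<and>
     (\<forall>n. \<forall>x\<in>netlevel r d lo Phi n. \<forall>f1\<in>set (snd x). \<forall>f2\<in>set (snd x).
         f1 \<noteq> f2 \<longrightarrow> (\<forall>\<sigma>. aff_comp f1 (Sword r d \<sigma>) \<noteq> f2))"

section \<open>Transition graph\<close>

text \<open>Edges are triples (v, relative position T_Delta^{-1}(Delta') of the child interval, v').\<close>
type_synonym edge = "aff list \<times> (real \<times> real) \<times> aff list"

definition tg_vertices :: "('i::finite \<Rightarrow> real) \<Rightarrow> ('i \<Rightarrow> real) \<Rightarrow> aff rel \<Rightarrow> (aff list \<Rightarrow> 'i list set list)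
     \<Rightarrow> aff list set" where
  "tg_vertices r d lo Phi = {v. \<exists>n \<Delta>. (\<Delta>, v) \<in> netlevel r d lo Phi n}"

definition rel_pos :: "real \<times> real \<Rightarrow> real \<times> real \<Rightarrow> real \<times> real" where
  "rel_pos \<Delta> \<Delta>' = ((fst \<Delta>' - fst \<Delta>) / (snd \<Delta> - fst \<Delta>), (snd \<Delta>' - fst \<Delta>) / (snd \<Delta> - fst \<Delta>))"

definition tg_edges :: "('i::finite \<Rightarrow> real) \<Rightarrow> ('i \<Rightarrow> real) \<Rightarrow> aff rel \<Rightarrow> (aff list \<Rightarrow> 'i list set list)
     \<Rightarrow> edge set" where
  "tg_edges r d lo Phi = {(v, rel_pos \<Delta> \<Delta>', v') | v v' \<Delta> \<Delta>' n.
      (\<Delta>, v) \<in> netlevel r d lo Phi n \<and> is_child r d lo Phi (\<Delta>, v) (\<Delta>', v')}"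

definition esrc :: "edge \<Rightarrow> aff list" where "esrc e = fst e"
definition etgt :: "edge \<Rightarrow> aff list" where "etgt e = snd (snd e)"

text \<open>For e = (v, pos, v') coming from a child (Delta',v') of (Delta,v) with
  pos = T_Delta^{-1}(Delta'), the condition T_Delta o f_i o S_omega = T_Delta' o g_j is equivalent to
  f_i o S_omega = T_pos o g_j.\<close>
definition tmat :: "('i::finite \<Rightarrow> real) \<Rightarrow> ('i \<Rightarrow> real) \<Rightarrow> ('i \<Rightarrow> real) \<Rightarrow> (aff list \<Rightarrow> 'i list set list)
     \<Rightarrow> edge \<Rightarrow> real mat" where
  "tmat r d p Phi e = (let v = fst e; pos = fst (snd e); v' = snd (snd e) in
     mat (length v) (length v') (\<lambda>(i, j).
        fmu01 r d p (v ! i) / fmu01 r d p (v' ! j) *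
        (\<Sum>\<omega>\<in>{\<omega>\<in>Phi v ! i. aff_comp (v ! i) (Sword r d \<omega>) = aff_comp (Tint pos) (v' ! j)}. pword p \<omega>)))"

definition FNC :: "('i::finite \<Rightarrow> real) \<Rightarrow> ('i \<Rightarrow> real) \<Rightarrow> aff rel \<Rightarrow> (aff list \<Rightarrow> 'i list set list) \<Rightarrow> bool" where
  "FNC r d lo Phi \<longleftrightarrow> finite (tg_vertices r d lo Phi) \<and> finite (tg_edges r d lo Phi)"

section \<open>Paths, loop classes, irreducibility\<close>

definition is_path :: "edge set \<Rightarrow> edge list \<Rightarrow> bool" where
  "is_path E es \<longleftrightarrow> set es \<subseteq> E \<and> (\<forall>k. Suc k < length es \<longrightarrow> etgt (es ! k) = esrc (es ! Suc k))"

definition induced_edges :: "edge set \<Rightarrow> aff list set \<Rightarrow> edge set" where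
  "induced_edges E W = {e\<in>E. esrc e \<in> W \<and> etgt e \<in> W}"

definition strongly_connected :: "edge set \<Rightarrow> aff list set \<Rightarrow> bool" where
  "strongly_connected E W \<longleftrightarrow> (\<forall>u\<in>W. \<forall>w\<in>W. u = w \<or>
     (\<exists>es. es \<noteq> [] \<and> is_path (induced_edges E W) es \<and> esrc (hd es) = u \<and> etgt (last es) = w))"

definition loop_class :: "aff list set \<Rightarrow> edge set \<Rightarrow> aff list set \<Rightarrow> bool" where
  "loop_class V E W \<longleftrightarrow> W \<subseteq> V \<and> strongly_connected E W \<and> induced_edges E W \<noteq> {} \<and>
     (\<forall>W'. W \<subset> W' \<and> W' \<subseteq> V \<longrightarrow> \<not> (strongly_connected E W' \<and> induced_edges E W' \<noteq> {}))"

fun prodT :: "(edge \<Rightarrow> real mat) \<Rightarrow> edge list \<Rightarrow> real mat" where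
  "prodT T [] = 0\<^sub>m 0 0"
| "prodT T [e] = T e"
| "prodT T (e # es) = T e * prodT T es"

definition mnorm :: "real mat \<Rightarrow> real" where
  "mnorm A = (\<Sum>i<dim_row A. \<Sum>j<dim_col A. A $$ (i, j))"

definition irreducible_loop_class :: "edge set \<Rightarrow> (edge \<Rightarrow> real mat) \<Rightarrow> aff list set \<Rightarrow> bool" where
  "irreducible_loop_class E T W \<longleftrightarrow>
     (\<exists>H C. finite H \<and> (\<forall>\<gamma>\<in>H. is_path E \<gamma>) \<and> C \<ge> 1 \<and>
       (\<forall>\<eta>1 \<eta>2. \<eta>1 \<noteq> [] \<and> \<eta>2 \<noteq> [] \<and> is_path (induced_edges E W) \<eta>1 \<and> is_path (induced_edges E W) \<eta>2 \<longrightarrow>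
          (\<exists>\<gamma>\<in>H. is_path E (\<eta>1 @ \<gamma> @ \<eta>2) \<and>
             mnorm (prodT T \<eta>1) * mnorm (prodT T \<eta>2) / C \<le> mnorm (prodT T (\<eta>1 @ \<gamma> @ \<eta>2)) \<and>
             mnorm (prodT T (\<eta>1 @ \<gamma> @ \<eta>2)) \<le> C * mnorm (prodT T \<eta>1) * mnorm (prodT T \<eta>2))))"

definition Msum :: "edge set \<Rightarrow> (edge \<Rightarrow> real mat) \<Rightarrow> aff list \<Rightarrow> aff list \<Rightarrow> real mat" where
  "Msum E T v w = mat (length v) (length w)
     (\<lambda>(i, j). \<Sum>e\<in>{e\<in>E. esrc e = v \<and> etgt e = w}. T e $$ (i, j))"

definition blk_off :: "aff list list \<Rightarrow> nat \<Rightarrow> nat" where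
  "blk_off vs k = sum_list (map length (take k vs))"

definition blk_idx :: "aff list list \<Rightarrow> nat \<Rightarrow> nat" where
  "blk_idx vs q = (THE k. k < length vs \<and> blk_off vs k \<le> q \<and> q < blk_off vs (Suc k))"

definition block_matrix :: "edge set \<Rightarrow> (edge \<Rightarrow> real mat) \<Rightarrow> aff list list \<Rightarrow> real mat" where
  "block_matrix E T vs = (let n = sum_list (map length vs) in
     mat n n (\<lambda>(q, s). let a = blk_idx vs q; b = blk_idx vs s in
        Msum E T (vs ! a) (vs ! b) $$ (q - blk_off vs a, s - blk_off vs b)))"

definition irreducible_mat :: "real mat \<Rightarrow> bool" where
  "irreducible_mat A \<longleftrightarrow> (\<forall>i<dim_row A. \<forall>j<dim_row A. \<exists>n\<ge>1. (A ^\<^sub>m n) $$ (i, j) > 0)"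

end

theory Submission
  imports Defs
begin

text \<open>Let \<open>A = T(\<eta>1)\<close>, \<open>B = T(\<eta>2)\<close>, let \<open>u\<close> be the last vertex of \<open>\<eta>1\<close> and \<open>w\<close> the first
  vertex of \<open>\<eta>2\<close>. Irreducibility of \<open>M(L)\<close> says that for every entry \<open>(b, c)\<close> of the block
  \<open>M(u, w)\<close> some power of \<open>M\<close> is positive there, i.e. some path \<open>\<gamma>\<close> from \<open>u\<close> to \<open>w\<close> has
  \<open>T(\<gamma>)(b, c) > 0\<close>; one such \<open>\<gamma>\<close> for each of the finitely many \<open>(u, b, w, c)\<close> goes into \<open>H\<close>.
  For non-negative matrices \<open>||A T(\<gamma>) B||\<close> is at least (column sum \<open>b\<close> of \<open>A\<close>) \<open>T(\<gamma>)(b, c)\<close>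
  (row sum \<open>c\<close> of \<open>B\<close>), and choosing a column of \<open>A\<close> and a row of \<open>B\<close> of maximal sum bounds
  this below by \<open>||A|| ||B|| T(\<gamma>)(b, c) / (|u| |w|)\<close>, while \<open>||A T(\<gamma>) B|| \<le> ||A|| ||T(\<gamma>)|| ||B||\<close>
  always. If \<open>u\<close> or \<open>w\<close> is the empty tuple both sides vanish, and any connecting path from
  strong connectivity will do.\<close>

section \<open>Non-negative matrices and the entry-sum norm\<close>

definition nonneg_mat :: "real mat \<Rightarrow> bool" where
  "nonneg_mat A \<longleftrightarrow> (\<forall>i<dim_row A. \<forall>j<dim_col A. 0 \<le> A $$ (i, j))"

definition col_sum :: "real mat \<Rightarrow> nat \<Rightarrow> real" where
  "col_sum A j = (\<Sum>i<dim_row A. A $$ (i, j))"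

definition row_sum :: "real mat \<Rightarrow> nat \<Rightarrow> real" where
  "row_sum A i = (\<Sum>j<dim_col A. A $$ (i, j))"

lemma ex_pos_if_sum_pos:
  fixes f :: "'a \<Rightarrow> real"
  assumes "0 < sum f S"
  obtains x where "x \<in> S" "0 < f x"
  using assms that by (meson not_less sum_nonpos)

lemma ex_ge_average:
  fixes f :: "'a \<Rightarrow> real"
  assumes "finite S" "S \<noteq> {}"
  obtains x where "x \<in> S" "sum f S \<le> card S * f x"
proof -
  have "\<exists>x\<in>S. sum f S \<le> card S * f x"
  proof (rule ccontr)
    assume "\<not> ?thesis"
    then have "(\<Sum>x\<in>S. card S * f x) < (\<Sum>x\<in>S. sum f S)"
      using assms by (intro sum_strict_mono) auto
    then show False by (simp add: sum_distrib_left)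
  qed
  then show thesis using that by blast
qed

lemma finite_ex_upper_bound:
  fixes f :: "'a \<Rightarrow> real"
  assumes "finite I"
  obtains C where "1 \<le> C" "\<And>i. i \<in> I \<Longrightarrow> f i \<le> C"
proof -
  obtain C0 where "\<And>i. i \<in> I \<Longrightarrow> f i \<le> C0"
    using bdd_above_finite[of "f ` I"] assms by (auto simp: bdd_above_def)
  then show thesis
    using that[of "max 1 C0"] by (simp add: le_max_iff_disj)
qed

lemma index_mult_mat_sum:
  assumes "A \<in> carrier_mat m n" "B \<in> carrier_mat n l" "i < m" "j < l"
  shows "(A * B) $$ (i, j) = (\<Sum>k<n. A $$ (i, k) * B $$ (k, j))"
  using assms by (auto simp: scalar_prod_def atLeast0LessThan intro!: sum.cong)

lemma nonneg_mat_mult: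
  assumes "A \<in> carrier_mat m n" "B \<in> carrier_mat n l" "nonneg_mat A" "nonneg_mat B"
  shows "nonneg_mat (A * B)"
proof -
  have "dim_row (A * B) = m" "dim_col (A * B) = l"
    using assms by auto
  then show ?thesis
    using assms unfolding nonneg_mat_def
    by (auto simp del: index_mult_mat simp: index_mult_mat_sum[OF assms(1,2)] intro!: sum_nonneg)
qed

lemma nonneg_mat_pow:
  assumes "A \<in> carrier_mat n n" "nonneg_mat A"
  shows "nonneg_mat (A ^\<^sub>m k)"
proof (induction k)
  case 0
  then show ?case by (simp add: nonneg_mat_def)
next
  case (Suc k)
  then show ?case using assms by (auto intro: nonneg_mat_mult[of _ n n _ n])
qed

lemma mult_mat_entry_pos_iff:
  assumes "A \<in> carrier_mat m n" "B \<in> carrier_mat n l" "nonneg_mat A" "nonneg_mat B" "i < m" "j < l"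
  shows "0 < (A * B) $$ (i, j) \<longleftrightarrow> (\<exists>k<n. 0 < A $$ (i, k) \<and> 0 < B $$ (k, j))"
proof -
  have nonneg: "0 \<le> A $$ (i, k)" "0 \<le> B $$ (k, j)" if "k < n" for k
    using assms that unfolding nonneg_mat_def by auto
  then have "(\<Sum>k<n. A $$ (i, k) * B $$ (k, j)) \<noteq> 0 \<longleftrightarrow> (\<exists>k<n. A $$ (i, k) * B $$ (k, j) \<noteq> 0)"
    by (subst sum_nonneg_eq_0_iff) auto
  moreover have "0 \<le> (\<Sum>k<n. A $$ (i, k) * B $$ (k, j))"
    using nonneg by (auto intro: sum_nonneg)
  ultimately show ?thesis
    using nonneg by (auto simp: index_mult_mat_sum[OF assms(1,2,5,6)] order_less_le)
qed

lemma col_sum_nonneg: "nonneg_mat A \<Longrightarrow> j < dim_col A \<Longrightarrow> 0 \<le> col_sum A j"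
  unfolding nonneg_mat_def col_sum_def by (auto intro: sum_nonneg)

lemma row_sum_nonneg: "nonneg_mat A \<Longrightarrow> i < dim_row A \<Longrightarrow> 0 \<le> row_sum A i"
  unfolding nonneg_mat_def row_sum_def by (auto intro: sum_nonneg)

lemma mnorm_eq_sum_col_sum: "mnorm A = (\<Sum>j<dim_col A. col_sum A j)"
  unfolding mnorm_def col_sum_def by (rule sum.swap)

lemma mnorm_eq_sum_row_sum: "mnorm A = (\<Sum>i<dim_row A. row_sum A i)"
  unfolding mnorm_def row_sum_def ..

lemma ex_col_sum_ge_average:
  assumes "A \<in> carrier_mat m n" "0 < n"
  obtains j where "j < n" "mnorm A \<le> n * col_sum A j"
  using ex_ge_average[of "{..<n}" "col_sum A"] assms that by (auto simp: mnorm_eq_sum_col_sum)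

lemma ex_row_sum_ge_average:
  assumes "A \<in> carrier_mat m n" "0 < m"
  obtains i where "i < m" "mnorm A \<le> m * row_sum A i"
  using ex_ge_average[of "{..<m}" "row_sum A"] assms that by (auto simp: mnorm_eq_sum_row_sum)

lemma mnorm_nonneg: "nonneg_mat A \<Longrightarrow> 0 \<le> mnorm A"
  unfolding mnorm_eq_sum_col_sum by (auto intro: sum_nonneg col_sum_nonneg)

lemma mnorm_mult:
  assumes "A \<in> carrier_mat m n" "B \<in> carrier_mat n l"
  shows "mnorm (A * B) = (\<Sum>k<n. col_sum A k * row_sum B k)"
proof -
  have dims: "dim_row (A * B) = m" "dim_col (A * B) = l" "dim_row A = m" "dim_col B = l"
    using assms by auto
  then have "mnorm (A * B) = (\<Sum>i<m. \<Sum>j<l. \<Sum>k<n. A $$ (i, k) * B $$ (k, j))"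
    using assms by (simp add: mnorm_def index_mult_mat_sum del: index_mult_mat)
  also have "\<dots> = (\<Sum>i<m. \<Sum>k<n. \<Sum>j<l. A $$ (i, k) * B $$ (k, j))"
    by (intro sum.cong refl sum.swap)
  also have "\<dots> = (\<Sum>k<n. \<Sum>i<m. \<Sum>j<l. A $$ (i, k) * B $$ (k, j))"
    by (rule sum.swap)
  also have "\<dots> = (\<Sum>k<n. col_sum A k * row_sum B k)"
    by (simp add: col_sum_def row_sum_def dims sum_product)
  finally show ?thesis .
qed

lemma col_sum_mult:
  assumes "A \<in> carrier_mat m n" "B \<in> carrier_mat n l" "j < l"
  shows "col_sum (A * B) j = (\<Sum>k<n. col_sum A k * B $$ (k, j))"
proof -
  have dims: "dim_row (A * B) = m" "dim_row A = m"
    using assms by auto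
  then have "col_sum (A * B) j = (\<Sum>i<m. \<Sum>k<n. A $$ (i, k) * B $$ (k, j))"
    using assms by (simp add: col_sum_def index_mult_mat_sum del: index_mult_mat)
  also have "\<dots> = (\<Sum>k<n. \<Sum>i<m. A $$ (i, k) * B $$ (k, j))"
    by (rule sum.swap)
  also have "\<dots> = (\<Sum>k<n. col_sum A k * B $$ (k, j))"
    by (simp add: col_sum_def dims sum_distrib_right)
  finally show ?thesis .
qed

lemma mnorm_mult_le:
  assumes "A \<in> carrier_mat m n" "B \<in> carrier_mat n l" "nonneg_mat A" "nonneg_mat B"
  shows "mnorm (A * B) \<le> mnorm A * mnorm B"
proof -
  have "row_sum B k \<le> mnorm B" if "k < n" for k
    unfolding mnorm_eq_sum_row_sum using assms that
    by (intro member_le_sum) (auto intro: row_sum_nonneg)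
  then have "mnorm (A * B) \<le> (\<Sum>k<n. col_sum A k * mnorm B)"
    unfolding mnorm_mult[OF assms(1,2)] using assms
    by (intro sum_mono mult_left_mono) (auto intro: col_sum_nonneg)
  also have "\<dots> = mnorm A * mnorm B"
    using assms by (simp add: mnorm_eq_sum_col_sum sum_distrib_right)
  finally show ?thesis .
qed

lemma mnorm_mult3_ge:
  assumes "A \<in> carrier_mat m p" "G \<in> carrier_mat p q" "B \<in> carrier_mat q n"
    and "nonneg_mat A" "nonneg_mat G" "nonneg_mat B" "b < p" "c < q"
  shows "col_sum A b * G $$ (b, c) * row_sum B c \<le> mnorm (A * G * B)"
proof -
  have AG: "A * G \<in> carrier_mat m q" "nonneg_mat (A * G)"
    using assms by (auto intro: nonneg_mat_mult)
  have dims: "dim_col (A * G) = q" "dim_row B = q"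
    using assms by auto
  have "col_sum A b * G $$ (b, c) \<le> col_sum (A * G) c"
    unfolding col_sum_mult[OF assms(1,2,8)] using assms
    by (intro member_le_sum[where f = "\<lambda>k. col_sum A k * G $$ (k, c)"])
       (auto simp: nonneg_mat_def intro!: mult_nonneg_nonneg col_sum_nonneg)
  then have "col_sum A b * G $$ (b, c) * row_sum B c \<le> col_sum (A * G) c * row_sum B c"
    using assms by (intro mult_right_mono row_sum_nonneg) auto
  also have "\<dots> \<le> mnorm (A * G * B)"
    unfolding mnorm_mult[OF AG(1) assms(3)] using assms AG dims
    by (intro member_le_sum[where f = "\<lambda>k. col_sum (A * G) k * row_sum B k"])
       (auto intro!: mult_nonneg_nonneg col_sum_nonneg row_sum_nonneg)
  finally show ?thesis .
qed

section \<open>Walks\<close>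

fun walk :: "edge set \<Rightarrow> aff list \<Rightarrow> aff list \<Rightarrow> edge list \<Rightarrow> bool" where
  "walk E u w [] \<longleftrightarrow> u = w"
| "walk E u w (e # es) \<longleftrightarrow> e \<in> E \<and> esrc e = u \<and> walk E (etgt e) w es"

lemma walk_append: "walk E u v xs \<Longrightarrow> walk E v w ys \<Longrightarrow> walk E u w (xs @ ys)"
  by (induction xs arbitrary: u) auto

lemma walk_mono: "walk E u w es \<Longrightarrow> E \<subseteq> E' \<Longrightarrow> walk E' u w es"
  by (induction es arbitrary: u) auto

lemma is_path_Cons:
  "is_path E (e # es) \<longleftrightarrow> e \<in> E \<and> is_path E es \<and> (es \<noteq> [] \<longrightarrow> etgt e = esrc (hd es))"
proof -
  have split_nat: "(\<forall>k. P k) \<longleftrightarrow> P 0 \<and> (\<forall>k. P (Suc k))" for P :: "nat \<Rightarrow> bool"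
    by (metis not0_implies_Suc)
  show ?thesis
    unfolding is_path_def split_nat[where P = "\<lambda>k. Suc k < length (e # es) \<longrightarrow> _ k"]
    by (auto simp: hd_conv_nth)
qed

lemma walk_iff_is_path:
  "es \<noteq> [] \<Longrightarrow> walk E u w es \<longleftrightarrow> is_path E es \<and> esrc (hd es) = u \<and> etgt (last es) = w"
proof (induction es arbitrary: u)
  case (Cons e es)
  show ?case
  proof (cases "es = []")
    case True
    then show ?thesis by (auto simp: is_path_def)
  next
    case False
    have "walk E u w (e # es) \<longleftrightarrow> e \<in> E \<and> esrc e = u \<and> walk E (etgt e) w es"
      by simp
    also have "\<dots> \<longleftrightarrow> e \<in> E \<and> esrc e = u \<and> is_path E es \<and> esrc (hd es) = etgt e \<and> etgt (last es) = w"
      using Cons.IH[OF False] by simp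
    also have "\<dots> \<longleftrightarrow> is_path E (e # es) \<and> esrc (hd (e # es)) = u \<and> etgt (last (e # es)) = w"
      using False by (auto simp: is_path_Cons)
    finally show ?thesis .
  qed
qed simp

lemma walk_imp_is_path: "walk E u w es \<Longrightarrow> is_path E es"
  by (cases "es = []") (simp_all add: is_path_def walk_iff_is_path)

lemma walk_induced_edges:
  assumes "is_path (induced_edges E W) es" "es \<noteq> []"
  shows "walk E (esrc (hd es)) (etgt (last es)) es" "esrc (hd es) \<in> W" "etgt (last es) \<in> W"
proof -
  have "hd es \<in> induced_edges E W" "last es \<in> induced_edges E W"
    using assms by (auto simp: is_path_def)
  then show "esrc (hd es) \<in> W" "etgt (last es) \<in> W"
    by (simp_all add: induced_edges_def)
  have "walk (induced_edges E W) (esrc (hd es)) (etgt (last es)) es"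
    using assms by (simp add: walk_iff_is_path)
  then show "walk E (esrc (hd es)) (etgt (last es)) es"
    by (rule walk_mono) (auto simp: induced_edges_def)
qed

lemma strongly_connected_imp_walk:
  assumes "strongly_connected E W" "u \<in> W" "w \<in> W"
  obtains \<gamma> where "walk E u w \<gamma>"
proof (cases "u = w")
  case True
  then show thesis
    using that[of "[]"] by simp
next
  case False
  then obtain \<gamma> where \<gamma>: "\<gamma> \<noteq> []" "is_path (induced_edges E W) \<gamma>"
      "esrc (hd \<gamma>) = u" "etgt (last \<gamma>) = w"
    using assms(1)[unfolded strongly_connected_def, rule_format, OF assms(2,3)] by blast
  show thesis
    using that walk_induced_edges(1)[OF \<gamma>(2,1)] unfolding \<gamma>(3,4) by blast
qed

lemma finite_connecting_walks:
  assumes "strongly_connected E W" "finite W"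
  obtains H where "finite H" "\<forall>\<gamma>\<in>H. is_path E \<gamma>"
    "\<And>u w. u \<in> W \<Longrightarrow> w \<in> W \<Longrightarrow> \<exists>\<gamma>\<in>H. walk E u w \<gamma>"
proof -
  define link where "link p = (SOME \<gamma>. walk E (fst p) (snd p) \<gamma>)" for p
  have link: "walk E u w (link (u, w))" if "u \<in> W" "w \<in> W" for u w
    unfolding link_def using strongly_connected_imp_walk[OF assms(1) that] by (metis fst_conv snd_conv someI_ex)
  show thesis
  proof (rule that[of "link ` (W \<times> W)"])
    show "finite (link ` (W \<times> W))"
      using assms(2) by simp
    show "\<forall>\<gamma>\<in>link ` (W \<times> W). is_path E \<gamma>"
      using link by (auto intro: walk_imp_is_path)
    show "\<exists>\<gamma>\<in>link ` (W \<times> W). walk E u w \<gamma>" if "u \<in> W" "w \<in> W" for u w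
      using link[OF that] that by blast
  qed
qed

section \<open>Block matrices\<close>

lemma blk_off_Suc: "a < length vs \<Longrightarrow> blk_off vs (Suc a) = blk_off vs a + length (vs ! a)"
  unfolding blk_off_def by (simp add: take_Suc_conv_app_nth)

lemma blk_off_mono: "a \<le> a' \<Longrightarrow> blk_off vs a \<le> blk_off vs a'"
proof (induction a' rule: dec_induct)
  case (step n)
  have "blk_off vs n \<le> blk_off vs (Suc n)"
    by (cases "n < length vs") (simp add: blk_off_Suc, simp add: blk_off_def)
  then show ?case
    using step.IH by linarith
qed simp

lemma blk_off_add_less:
  assumes "a < length vs" "b < length (vs ! a)"
  shows "blk_off vs a + b < sum_list (map length vs)"
proof -
  have "blk_off vs a + b < blk_off vs (Suc a)"
    using assms by (simp add: blk_off_Suc)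
  also have "\<dots> \<le> blk_off vs (length vs)"
    using assms by (intro blk_off_mono) simp
  finally show ?thesis
    by (simp add: blk_off_def)
qed

lemma blk_idx_blk_off_add:
  assumes "a < length vs" "b < length (vs ! a)"
  shows "blk_idx vs (blk_off vs a + b) = a"
  unfolding blk_idx_def
proof (rule the_equality)
  fix k
  assume k: "k < length vs \<and> blk_off vs k \<le> blk_off vs a + b \<and> blk_off vs a + b < blk_off vs (Suc k)"
  show "k = a"
  proof (rule ccontr)
    assume "k \<noteq> a"
    then have "Suc k \<le> a \<or> Suc a \<le> k"
      by auto
    then show False
      using blk_off_mono[of "Suc k" a vs] blk_off_mono[of "Suc a" k vs] k assms
      by (auto simp: blk_off_Suc)
  qed
qed (use assms in \<open>simp add: blk_off_Suc\<close>)

lemma blk_decompose: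
  "q < sum_list (map length vs) \<Longrightarrow> \<exists>a<length vs. \<exists>b<length (vs ! a). q = blk_off vs a + b"
proof (induction vs arbitrary: q)
  case (Cons v vs)
  show ?case
  proof (cases "q < length v")
    case True
    then show ?thesis
      by (intro exI[of _ 0]) (simp add: blk_off_def)
  next
    case False
    then have "q - length v < sum_list (map length vs)"
      using Cons.prems by simp
    then obtain a b where ab: "a < length vs" "b < length (vs ! a)" "q - length v = blk_off vs a + b"
      using Cons.IH by blast
    have "blk_off (v # vs) (Suc a) = length v + blk_off vs a"
      by (simp add: blk_off_def)
    then show ?thesis
      using ab False by (intro exI[of _ "Suc a"] exI[of _ b]) auto
  qed
qed simp

lemma block_matrix_carrier:
  "block_matrix E T vs \<in> carrier_mat (sum_list (map length vs)) (sum_list (map length vs))"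
  unfolding block_matrix_def Let_def by simp

lemma block_matrix_entry:
  assumes "a < length vs" "b < length (vs ! a)" "a' < length vs" "c < length (vs ! a')"
  shows "block_matrix E T vs $$ (blk_off vs a + b, blk_off vs a' + c) =
    (\<Sum>e\<in>{e\<in>E. esrc e = vs ! a \<and> etgt e = vs ! a'}. T e $$ (b, c))"
  using assms blk_off_add_less[OF assms(1,2)] blk_off_add_less[OF assms(3,4)]
    blk_idx_blk_off_add[OF assms(1,2)] blk_idx_blk_off_add[OF assms(3,4)]
  by (simp add: block_matrix_def Msum_def Let_def)

lemma block_matrix_pos_imp_edge:
  assumes "a < length vs" "b < length (vs ! a)" "a' < length vs" "c < length (vs ! a')"
    and "0 < block_matrix E T vs $$ (blk_off vs a + b, blk_off vs a' + c)"
  obtains e where "e \<in> E" "esrc e = vs ! a" "etgt e = vs ! a'" "0 < T e $$ (b, c)"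
  using assms(5) that unfolding block_matrix_entry[OF assms(1-4)]
  by (auto elim: ex_pos_if_sum_pos)

section \<open>Transition matrices along walks\<close>

text \<open>\<open>prodT T []\<close> is the \<open>0 \<times> 0\<close> matrix, so statements about \<open>prodT\<close> require non-empty walks.\<close>

lemma prodT_Cons: "es \<noteq> [] \<Longrightarrow> prodT T (e # es) = T e * prodT T es"
  by (cases es) auto

locale transition_matrices =
  fixes T :: "edge \<Rightarrow> real mat"
  assumes T_carrier: "\<And>e. T e \<in> carrier_mat (length (esrc e)) (length (etgt e))"
    and T_nonneg: "\<And>e. nonneg_mat (T e)"
begin

lemma prodT_carrier: "walk E u w es \<Longrightarrow> es \<noteq> [] \<Longrightarrow> prodT T es \<in> carrier_mat (length u) (length w)"
proof (induction es arbitrary: u)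
  case (Cons e es)
  then show ?case
    using T_carrier[of e] by (cases "es = []") (auto simp: prodT_Cons)
qed simp

lemma prodT_nonneg: "walk E u w es \<Longrightarrow> es \<noteq> [] \<Longrightarrow> nonneg_mat (prodT T es)"
proof (induction es arbitrary: u)
  case (Cons e es)
  show ?case
  proof (cases "es = []")
    case True
    then show ?thesis by (simp add: T_nonneg)
  next
    case False
    then show ?thesis
      using Cons T_carrier[of e] prodT_carrier[of E "etgt e" w es]
      by (auto simp: prodT_Cons intro: nonneg_mat_mult T_nonneg)
  qed
qed simp

lemma prodT_append:
  assumes "walk E u v xs" "walk E v w ys" "xs \<noteq> []" "ys \<noteq> []"
  shows "prodT T (xs @ ys) = prodT T xs * prodT T ys"
  using assms
proof (induction xs arbitrary: u)
  case (Cons e xs)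
  show ?case
  proof (cases "xs = []")
    case True
    then show ?thesis using Cons by (simp add: prodT_Cons)
  next
    case False
    have "prodT T ((e # xs) @ ys) = T e * (prodT T xs * prodT T ys)"
      using Cons.IH[of "etgt e"] Cons.prems False by (simp add: prodT_Cons)
    also have "\<dots> = (T e * prodT T xs) * prodT T ys"
      using Cons False T_carrier[of e] prodT_carrier[of E "etgt e" v xs] prodT_carrier[of E v w ys]
      by (intro assoc_mult_mat[symmetric]) auto
    finally show ?thesis
      using False by (simp add: prodT_Cons)
  qed
qed simp

lemma mnorm_prodT_through_empty_vertex:
  assumes "walk E x v xs" "walk E v y ys" "xs \<noteq> []" "ys \<noteq> []" "length v = 0"
  shows "mnorm (prodT T xs) = 0" "mnorm (prodT T ys) = 0" "mnorm (prodT T (xs @ ys)) = 0"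
proof -
  have xs: "prodT T xs \<in> carrier_mat (length x) 0" and ys: "prodT T ys \<in> carrier_mat 0 (length y)"
    using assms prodT_carrier by fastforce+
  then show "mnorm (prodT T xs) = 0" "mnorm (prodT T ys) = 0"
    by (auto simp: mnorm_def)
  show "mnorm (prodT T (xs @ ys)) = 0"
    using mnorm_mult[OF xs ys] prodT_append[OF assms(1-4)] by simp
qed

lemma block_matrix_nonneg: "nonneg_mat (block_matrix E T vs)"
  unfolding nonneg_mat_def
proof (intro allI impI)
  fix q s
  assume "q < dim_row (block_matrix E T vs)" "s < dim_col (block_matrix E T vs)"
  then have "q < sum_list (map length vs)" "s < sum_list (map length vs)"
    using block_matrix_carrier[of E T vs] by auto
  then obtain a b a' c where ab: "a < length vs" "b < length (vs ! a)" "q = blk_off vs a + b"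
    and a'c: "a' < length vs" "c < length (vs ! a')" "s = blk_off vs a' + c"
    using blk_decompose by metis
  have "0 \<le> T e $$ (b, c)" if "esrc e = vs ! a" "etgt e = vs ! a'" for e
    using T_nonneg[of e] T_carrier[of e] that ab a'c unfolding nonneg_mat_def by auto
  then show "0 \<le> block_matrix E T vs $$ (q, s)"
    unfolding ab(3) a'c(3) block_matrix_entry[OF ab(1,2) a'c(1,2)] by (auto intro: sum_nonneg)
qed

lemma walk_snoc_pos_entry:
  assumes "walk E u v \<gamma>" "\<gamma> \<noteq> []" "0 < prodT T \<gamma> $$ (b, k)" "b < length u" "k < length v"
    and "e \<in> E" "esrc e = v" "0 < T e $$ (k, c)" "c < length (etgt e)"
  shows "walk E u (etgt e) (\<gamma> @ [e])" "0 < prodT T (\<gamma> @ [e]) $$ (b, c)"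
proof -
  have e: "walk E v (etgt e) [e]"
    using assms(6,7) by simp
  then show "walk E u (etgt e) (\<gamma> @ [e])"
    by (rule walk_append[OF assms(1)])
  have "prodT T (\<gamma> @ [e]) = prodT T \<gamma> * T e"
    using prodT_append[OF assms(1) e assms(2)] by simp
  moreover have "T e \<in> carrier_mat (length v) (length (etgt e))"
    using T_carrier[of e] assms(7) by simp
  ultimately show "0 < prodT T (\<gamma> @ [e]) $$ (b, c)"
    using mult_mat_entry_pos_iff[OF prodT_carrier[OF assms(1,2)] _ prodT_nonneg[OF assms(1,2)] T_nonneg
        assms(4,9)] assms(3,5,8) by auto
qed

lemma block_matrix_pow_pos_imp_walk:
  assumes "a < length vs" "b < length (vs ! a)" "a' < length vs" "c < length (vs ! a')"
    and "0 < (block_matrix E T vs ^\<^sub>m Suc n) $$ (blk_off vs a + b, blk_off vs a' + c)"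
  shows "\<exists>\<gamma>. \<gamma> \<noteq> [] \<and> walk E (vs ! a) (vs ! a') \<gamma> \<and> 0 < prodT T \<gamma> $$ (b, c)"
  using assms(3-5)
proof (induction n arbitrary: a' c)
  case 0
  have "block_matrix E T vs ^\<^sub>m Suc 0 = block_matrix E T vs"
    using block_matrix_carrier[of E T vs] by simp
  then obtain e where "e \<in> E" "esrc e = vs ! a" "etgt e = vs ! a'" "0 < T e $$ (b, c)"
    using block_matrix_pos_imp_edge[OF assms(1,2) "0.prems"(1,2)] "0.prems"(3) by metis
  then show ?case
    by (intro exI[of _ "[e]"]) simp
next
  case (Suc n)
  define M where "M = block_matrix E T vs"
  define N where "N = sum_list (map length vs)"
  have M: "M \<in> carrier_mat N N" "nonneg_mat M"
    unfolding M_def N_def by (simp_all add: block_matrix_carrier block_matrix_nonneg)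
  have "0 < (M ^\<^sub>m Suc n * M) $$ (blk_off vs a + b, blk_off vs a' + c)"
    using Suc.prems(3) unfolding M_def by simp
  then obtain t where t: "t < N" "0 < (M ^\<^sub>m Suc n) $$ (blk_off vs a + b, t)"
      "0 < M $$ (t, blk_off vs a' + c)"
    using mult_mat_entry_pos_iff[OF pow_carrier_mat[OF M(1)] M(1) nonneg_mat_pow[OF M] M(2)]
      blk_off_add_less[OF assms(1,2)] blk_off_add_less[OF Suc.prems(1,2)]
    unfolding N_def by blast
  then obtain a'' b'' where a'': "a'' < length vs" "b'' < length (vs ! a'')" "t = blk_off vs a'' + b''"
    using blk_decompose unfolding N_def by blast
  obtain \<gamma> where \<gamma>: "\<gamma> \<noteq> []" "walk E (vs ! a) (vs ! a'') \<gamma>" "0 < prodT T \<gamma> $$ (b, b'')"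
    using Suc.IH[OF a''(1,2)] t(2) a''(3) unfolding M_def by blast
  obtain e where e: "e \<in> E" "esrc e = vs ! a''" "etgt e = vs ! a'" "0 < T e $$ (b'', c)"
    using block_matrix_pos_imp_edge[OF a''(1,2) Suc.prems(1,2)] t(3) a''(3) unfolding M_def by metis
  show ?case
    using walk_snoc_pos_entry[OF \<gamma>(2,1,3) assms(2) a''(2) e(1,2,4)] Suc.prems(2) unfolding e(3)
    by (intro exI[of _ "\<gamma> @ [e]"]) simp
qed

lemma irreducible_block_matrix_imp_walk:
  assumes "irreducible_mat (block_matrix E T vs)" "u \<in> set vs" "w \<in> set vs" "b < length u" "c < length w"
  shows "\<exists>\<gamma>. \<gamma> \<noteq> [] \<and> walk E u w \<gamma> \<and> 0 < prodT T \<gamma> $$ (b, c)"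
proof -
  obtain a where a: "a < length vs" "vs ! a = u"
    using assms(2) by (metis in_set_conv_nth)
  obtain a' where a': "a' < length vs" "vs ! a' = w"
    using assms(3) by (metis in_set_conv_nth)
  have bc: "b < length (vs ! a)" "c < length (vs ! a')"
    using a a' assms(4,5) by simp_all
  have "blk_off vs a + b < dim_row (block_matrix E T vs)" "blk_off vs a' + c < dim_row (block_matrix E T vs)"
    using blk_off_add_less[OF a(1) bc(1)] blk_off_add_less[OF a'(1) bc(2)] block_matrix_carrier[of E T vs]
    by auto
  then obtain n where "1 \<le> n" "0 < (block_matrix E T vs ^\<^sub>m n) $$ (blk_off vs a + b, blk_off vs a' + c)"
    using assms(1) unfolding irreducible_mat_def by blast
  then have "0 < (block_matrix E T vs ^\<^sub>m Suc (n - 1)) $$ (blk_off vs a + b, blk_off vs a' + c)"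
    by simp
  from block_matrix_pow_pos_imp_walk[OF a(1) bc(1) a'(1) bc(2) this] show ?thesis
    unfolding a(2) a'(2) .
qed

lemma finite_positive_walks:
  assumes "set vs = W" "irreducible_mat (block_matrix E T vs)"
  obtains H C where "finite H" "\<forall>\<gamma>\<in>H. is_path E \<gamma>" "1 \<le> C"
    "\<And>u w b c. u \<in> W \<Longrightarrow> w \<in> W \<Longrightarrow> b < length u \<Longrightarrow> c < length w \<Longrightarrow>
      \<exists>\<gamma>\<in>H. \<gamma> \<noteq> [] \<and> walk E u w \<gamma> \<and> mnorm (prodT T \<gamma>) \<le> C \<and>
        length u * length w \<le> C * prodT T \<gamma> $$ (b, c)"
proof -
  define I where "I = (SIGMA u:W. {..<length u}) \<times> (SIGMA w:W. {..<length w})"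
  define pos where "pos i = (case i of ((u, b), (w, c)) \<Rightarrow>
    SOME \<gamma>. \<gamma> \<noteq> [] \<and> walk E u w \<gamma> \<and> 0 < prodT T \<gamma> $$ (b, c))" for i
  have pos: "pos ((u, b), (w, c)) \<noteq> [] \<and> walk E u w (pos ((u, b), (w, c))) \<and>
      0 < prodT T (pos ((u, b), (w, c))) $$ (b, c)" if "((u, b), (w, c)) \<in> I" for u b w c
  proof -
    have "u \<in> set vs" "w \<in> set vs" "b < length u" "c < length w"
      using that assms(1) unfolding I_def by auto
    from irreducible_block_matrix_imp_walk[OF assms(2) this] show ?thesis
      unfolding pos_def case_prod_conv by (rule someI_ex)
  qed
  have "finite I"
    unfolding I_def using assms(1) by auto
  define bound where "bound i = (case i of ((u, b), (w, c)) \<Rightarrow>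
    max (mnorm (prodT T (pos i))) (length u * length w / prodT T (pos i) $$ (b, c)))" for i
  obtain C where "1 \<le> C" and C: "\<And>i. i \<in> I \<Longrightarrow> bound i \<le> C"
    using finite_ex_upper_bound[where f = bound, OF \<open>finite I\<close>] by blast
  show thesis
  proof (rule that[of "pos ` I" C])
    show "finite (pos ` I)"
      using \<open>finite I\<close> by simp
    show "\<forall>\<gamma>\<in>pos ` I. is_path E \<gamma>"
      using pos by (force intro: walk_imp_is_path)
    show "\<exists>\<gamma>\<in>pos ` I. \<gamma> \<noteq> [] \<and> walk E u w \<gamma> \<and> mnorm (prodT T \<gamma>) \<le> C \<and>
        length u * length w \<le> C * prodT T \<gamma> $$ (b, c)"
      if "u \<in> W" "w \<in> W" "b < length u" "c < length w" for u w b c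
    proof -
      have i: "((u, b), (w, c)) \<in> I"
        using that unfolding I_def by simp
      then have "length u * length w / prodT T (pos ((u, b), (w, c))) $$ (b, c) \<le> C"
        "mnorm (prodT T (pos ((u, b), (w, c)))) \<le> C"
        using C[OF i] unfolding bound_def by simp_all
      then show ?thesis
        using pos[OF i] i by (intro bexI[of _ "pos ((u, b), (w, c))"]) (auto simp: pos_divide_le_eq)
    qed
  qed (rule \<open>1 \<le> C\<close>)
qed

section \<open>Irreducible loop classes\<close>

lemma prodT_glue_bounds:
  assumes walks: "walk E x u \<eta>1" "walk E u w \<gamma>" "walk E w y \<eta>2"
    and nonempty: "\<eta>1 \<noteq> []" "\<gamma> \<noteq> []" "\<eta>2 \<noteq> []"
    and "b < length u" "c < length w"
  shows "col_sum (prodT T \<eta>1) b * prodT T \<gamma> $$ (b, c) * row_sum (prodT T \<eta>2) c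
      \<le> mnorm (prodT T (\<eta>1 @ \<gamma> @ \<eta>2))"
    and "mnorm (prodT T (\<eta>1 @ \<gamma> @ \<eta>2))
      \<le> mnorm (prodT T \<eta>1) * mnorm (prodT T \<gamma>) * mnorm (prodT T \<eta>2)"
proof -
  let ?A = "prodT T \<eta>1" and ?G = "prodT T \<gamma>" and ?B = "prodT T \<eta>2"
  note carrier = prodT_carrier[OF walks(1) nonempty(1)] prodT_carrier[OF walks(2) nonempty(2)]
    prodT_carrier[OF walks(3) nonempty(3)]
  note nonneg = prodT_nonneg[OF walks(1) nonempty(1)] prodT_nonneg[OF walks(2) nonempty(2)]
    prodT_nonneg[OF walks(3) nonempty(3)]
  have "prodT T ((\<eta>1 @ \<gamma>) @ \<eta>2) = prodT T (\<eta>1 @ \<gamma>) * ?B"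
    using walk_append[OF walks(1,2)] walks(3) nonempty by (intro prodT_append) auto
  then have split: "prodT T (\<eta>1 @ \<gamma> @ \<eta>2) = ?A * ?G * ?B"
    using prodT_append[OF walks(1,2) nonempty(1,2)] by simp
  show "col_sum ?A b * ?G $$ (b, c) * row_sum ?B c \<le> mnorm (prodT T (\<eta>1 @ \<gamma> @ \<eta>2))"
    unfolding split by (rule mnorm_mult3_ge[OF carrier nonneg assms(7,8)])
  have "mnorm (?A * ?G * ?B) \<le> mnorm (?A * ?G) * mnorm ?B"
    using carrier nonneg by (intro mnorm_mult_le nonneg_mat_mult) auto
  also have "\<dots> \<le> mnorm ?A * mnorm ?G * mnorm ?B"
    by (intro mult_right_mono mnorm_mult_le[OF carrier(1,2) nonneg(1,2)] mnorm_nonneg nonneg(3))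
  finally show "mnorm (prodT T (\<eta>1 @ \<gamma> @ \<eta>2)) \<le> mnorm ?A * mnorm ?G * mnorm ?B"
    unfolding split .
qed

lemma prodT_glue_bounds_const:
  assumes walks: "walk E x u \<eta>1" "walk E u w \<gamma>" "walk E w y \<eta>2"
    and nonempty: "\<eta>1 \<noteq> []" "\<gamma> \<noteq> []" "\<eta>2 \<noteq> []"
    and bc: "b < length u" "c < length w"
    and col_max: "mnorm (prodT T \<eta>1) \<le> length u * col_sum (prodT T \<eta>1) b"
    and row_max: "mnorm (prodT T \<eta>2) \<le> length w * row_sum (prodT T \<eta>2) c"
    and C: "0 < C" "mnorm (prodT T \<gamma>) \<le> C" "length u * length w \<le> C * prodT T \<gamma> $$ (b, c)"
  shows "mnorm (prodT T \<eta>1) * mnorm (prodT T \<eta>2) / C \<le> mnorm (prodT T (\<eta>1 @ \<gamma> @ \<eta>2))"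
    and "mnorm (prodT T (\<eta>1 @ \<gamma> @ \<eta>2)) \<le> C * mnorm (prodT T \<eta>1) * mnorm (prodT T \<eta>2)"
proof -
  let ?A = "prodT T \<eta>1" and ?G = "prodT T \<gamma>" and ?B = "prodT T \<eta>2"
  have carrier: "?A \<in> carrier_mat (length x) (length u)" "?B \<in> carrier_mat (length w) (length y)"
    using prodT_carrier[OF walks(1) nonempty(1)] prodT_carrier[OF walks(3) nonempty(3)] by simp_all
  have nonneg: "nonneg_mat ?A" "nonneg_mat ?B"
    using prodT_nonneg[OF walks(1) nonempty(1)] prodT_nonneg[OF walks(3) nonempty(3)] by simp_all
  have sums: "0 \<le> col_sum ?A b" "0 \<le> row_sum ?B c"
    using col_sum_nonneg[OF nonneg(1)] row_sum_nonneg[OF nonneg(2)] carrier bc by auto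
  have "mnorm ?A * mnorm ?B \<le> (length u * col_sum ?A b) * (length w * row_sum ?B c)"
    using col_max row_max sums mnorm_nonneg[OF nonneg(2)] by (intro mult_mono) auto
  also have "\<dots> = (length u * length w) * (col_sum ?A b * row_sum ?B c)"
    by (simp add: mult_ac)
  also have "\<dots> \<le> (C * ?G $$ (b, c)) * (col_sum ?A b * row_sum ?B c)"
    using C(3) sums by (intro mult_right_mono) auto
  also have "\<dots> = C * (col_sum ?A b * ?G $$ (b, c) * row_sum ?B c)"
    by (simp add: mult_ac)
  also have "\<dots> \<le> C * mnorm (prodT T (\<eta>1 @ \<gamma> @ \<eta>2))"
    using prodT_glue_bounds(1)[OF walks nonempty bc] C(1) by simp
  finally show "mnorm ?A * mnorm ?B / C \<le> mnorm (prodT T (\<eta>1 @ \<gamma> @ \<eta>2))"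
    using C(1) by (simp add: pos_divide_le_eq mult.commute)
  have "mnorm (prodT T (\<eta>1 @ \<gamma> @ \<eta>2)) \<le> mnorm ?A * mnorm ?G * mnorm ?B"
    by (rule prodT_glue_bounds(2)[OF walks nonempty bc])
  also have "\<dots> \<le> mnorm ?A * C * mnorm ?B"
    using C(2) mnorm_nonneg nonneg by (intro mult_right_mono mult_left_mono) auto
  finally show "mnorm (prodT T (\<eta>1 @ \<gamma> @ \<eta>2)) \<le> C * mnorm ?A * mnorm ?B"
    by (simp add: mult_ac)
qed

lemma glue_with_connectors:
  assumes \<eta>: "walk E x u \<eta>1" "walk E w y \<eta>2" "\<eta>1 \<noteq> []" "\<eta>2 \<noteq> []"
    and link: "\<exists>\<gamma>\<in>H. walk E u w \<gamma>"
    and pos: "\<And>b c. b < length u \<Longrightarrow> c < length w \<Longrightarrow>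
      \<exists>\<gamma>\<in>H. \<gamma> \<noteq> [] \<and> walk E u w \<gamma> \<and> mnorm (prodT T \<gamma>) \<le> C \<and>
        length u * length w \<le> C * prodT T \<gamma> $$ (b, c)"
    and "1 \<le> C"
  shows "\<exists>\<gamma>\<in>H. is_path E (\<eta>1 @ \<gamma> @ \<eta>2) \<and>
      mnorm (prodT T \<eta>1) * mnorm (prodT T \<eta>2) / C \<le> mnorm (prodT T (\<eta>1 @ \<gamma> @ \<eta>2)) \<and>
      mnorm (prodT T (\<eta>1 @ \<gamma> @ \<eta>2)) \<le> C * mnorm (prodT T \<eta>1) * mnorm (prodT T \<eta>2)"
proof (cases "length u = 0 \<or> length w = 0")
  case True
  obtain \<gamma> where "\<gamma> \<in> H" "walk E u w \<gamma>"
    using link by blast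
  moreover have "walk E x w (\<eta>1 @ \<gamma>)" "walk E u y (\<gamma> @ \<eta>2)"
    using \<eta> \<open>walk E u w \<gamma>\<close> by (auto intro: walk_append)
  moreover have "mnorm (prodT T (\<eta>1 @ \<gamma> @ \<eta>2)) = 0 \<and> mnorm (prodT T \<eta>1) * mnorm (prodT T \<eta>2) = 0"
    using True mnorm_prodT_through_empty_vertex[OF \<eta>(1) \<open>walk E u y (\<gamma> @ \<eta>2)\<close>]
      mnorm_prodT_through_empty_vertex[OF \<open>walk E x w (\<eta>1 @ \<gamma>)\<close> \<eta>(2)] \<eta>(3,4)
    by auto
  ultimately show ?thesis
    using \<eta> \<open>1 \<le> C\<close> by (intro bexI[of _ \<gamma>]) (auto intro: walk_imp_is_path walk_append)
next
  case False
  obtain b where b: "b < length u" "mnorm (prodT T \<eta>1) \<le> length u * col_sum (prodT T \<eta>1) b"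
    using ex_col_sum_ge_average[OF prodT_carrier[OF \<eta>(1,3)]] False by blast
  obtain c where c: "c < length w" "mnorm (prodT T \<eta>2) \<le> length w * row_sum (prodT T \<eta>2) c"
    using ex_row_sum_ge_average[OF prodT_carrier[OF \<eta>(2,4)]] False by blast
  obtain \<gamma> where "\<gamma> \<in> H" "\<gamma> \<noteq> []" "walk E u w \<gamma>" "mnorm (prodT T \<gamma>) \<le> C"
    "length u * length w \<le> C * prodT T \<gamma> $$ (b, c)"
    using pos[OF b(1) c(1)] by blast
  with prodT_glue_bounds_const[OF \<eta>(1) \<open>walk E u w \<gamma>\<close> \<eta>(2,3) \<open>\<gamma> \<noteq> []\<close> \<eta>(4) b(1) c(1) b(2) c(2)]
  show ?thesis
    using \<eta> \<open>1 \<le> C\<close> by (intro bexI[of _ \<gamma>]) (auto intro: walk_imp_is_path walk_append)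
qed

theorem irreducible_loop_class_if_irreducible_block_matrix:
  assumes "strongly_connected E W" "set vs = W" "irreducible_mat (block_matrix E T vs)"
  shows "irreducible_loop_class E T W"
proof -
  obtain H1 where H1: "finite H1" "\<forall>\<gamma>\<in>H1. is_path E \<gamma>"
    and link: "\<And>u w. u \<in> W \<Longrightarrow> w \<in> W \<Longrightarrow> \<exists>\<gamma>\<in>H1. walk E u w \<gamma>"
    using finite_connecting_walks[OF assms(1)] assms(2) by blast
  obtain H2 C where H2: "finite H2" "\<forall>\<gamma>\<in>H2. is_path E \<gamma>" and "1 \<le> C"
    and pos: "\<And>u w b c. u \<in> W \<Longrightarrow> w \<in> W \<Longrightarrow> b < length u \<Longrightarrow> c < length w \<Longrightarrow>
      \<exists>\<gamma>\<in>H2. \<gamma> \<noteq> [] \<and> walk E u w \<gamma> \<and> mnorm (prodT T \<gamma>) \<le> C \<and>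
        length u * length w \<le> C * prodT T \<gamma> $$ (b, c)"
    using finite_positive_walks[OF assms(2,3)] by blast
  have "\<exists>\<gamma>\<in>H1 \<union> H2. is_path E (\<eta>1 @ \<gamma> @ \<eta>2) \<and>
      mnorm (prodT T \<eta>1) * mnorm (prodT T \<eta>2) / C \<le> mnorm (prodT T (\<eta>1 @ \<gamma> @ \<eta>2)) \<and>
      mnorm (prodT T (\<eta>1 @ \<gamma> @ \<eta>2)) \<le> C * mnorm (prodT T \<eta>1) * mnorm (prodT T \<eta>2)"
    if nonempty: "\<eta>1 \<noteq> []" "\<eta>2 \<noteq> []"
      and paths: "is_path (induced_edges E W) \<eta>1" "is_path (induced_edges E W) \<eta>2" for \<eta>1 \<eta>2
  proof (rule glue_with_connectors)
    show "walk E (esrc (hd \<eta>1)) (etgt (last \<eta>1)) \<eta>1" "walk E (esrc (hd \<eta>2)) (etgt (last \<eta>2)) \<eta>2"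
      using walk_induced_edges(1) paths nonempty by blast+
    have "etgt (last \<eta>1) \<in> W" "esrc (hd \<eta>2) \<in> W"
      using walk_induced_edges(2,3) paths nonempty by blast+
    then show "\<exists>\<gamma>\<in>H1 \<union> H2. walk E (etgt (last \<eta>1)) (esrc (hd \<eta>2)) \<gamma>"
      "\<And>b c. b < length (etgt (last \<eta>1)) \<Longrightarrow> c < length (esrc (hd \<eta>2)) \<Longrightarrow>
        \<exists>\<gamma>\<in>H1 \<union> H2. \<gamma> \<noteq> [] \<and> walk E (etgt (last \<eta>1)) (esrc (hd \<eta>2)) \<gamma> \<and>
          mnorm (prodT T \<gamma>) \<le> C \<and>
          length (etgt (last \<eta>1)) * length (esrc (hd \<eta>2)) \<le> C * prodT T \<gamma> $$ (b, c)"
      using link pos by blast+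
  qed (use nonempty \<open>1 \<le> C\<close> in simp_all)
  then show ?thesis
    unfolding irreducible_loop_class_def using H1 H2 \<open>1 \<le> C\<close>
    by (intro exI[of _ "H1 \<union> H2"] exI[of _ C]) auto
qed

end

lemma tmat_carrier: "tmat r d p Phi e \<in> carrier_mat (length (esrc e)) (length (etgt e))"
  unfolding tmat_def Let_def esrc_def etgt_def by simp

lemma tmat_nonneg:
  assumes "\<And>i. 0 < p i"
  shows "nonneg_mat (tmat r d p Phi e)"
proof -
  have "0 \<le> pword p \<omega>" for \<omega>
    unfolding pword_def using assms by (intro prod_list_nonneg) (auto intro: less_imp_le)
  then show ?thesis
    unfolding nonneg_mat_def tmat_def Let_def fmu01_def
    by (auto intro!: mult_nonneg_nonneg divide_nonneg_nonneg sum_nonneg)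
qed

theorem lemma4p5:
  fixes r d p :: "'i::finite \<Rightarrow> real"
    and lo :: "aff rel"
    and Phi :: "aff list \<Rightarrow> 'i list set list"
    and W :: "aff list set"
    and vs :: "aff list list"
  assumes "wifs r d p"
    and "\<not> (\<exists>x. ssset r d = {x})"
    and "convex hull (ssset r d) = {0..1}"
    and "strict_linear_order lo"
    and "iteration_rule r d lo Phi"
    and "FNC r d lo Phi"
    and "loop_class (tg_vertices r d lo Phi) (tg_edges r d lo Phi) W"
    and "distinct vs" and "set vs = W"
    and "irreducible_mat (block_matrix (tg_edges r d lo Phi) (tmat r d p Phi) vs)"
  shows "irreducible_loop_class (tg_edges r d lo Phi) (tmat r d p Phi) W"
proof -
  \<comment> \<open>Besides strong connectivity of the loop class, only \<open>p > 0\<close> (for non-negativity of the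
    \<open>T(e)\<close>) is used.\<close>
  have "\<And>i. 0 < p i"
    using assms(1) by (simp add: wifs_def)
  then interpret transition_matrices "tmat r d p Phi"
    by unfold_locales (simp_all add: tmat_carrier tmat_nonneg)
  have "strongly_connected (tg_edges r d lo Phi) W"
    using assms(7) by (simp add: loop_class_def)
  then show ?thesis
    using irreducible_loop_class_if_irreducible_block_matrix assms(9,10) by blast
qed

end
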